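(* Let $0<\beta<1$. There exist a strictly positive function $\eta:\mathbb{N}_0\to(0,\infty)$ and a nonnegative strictly increasing function $t^*:[0,\infty)\to[0,\infty)$ with $t^*(v)=0$ iff $v=0$, both depending only on $\beta$, such that: if $u$ is a solution of $\partial_tu=\Delta(u^\beta)$ on $[0,\infty)\times\mathbb{Z}$ with initial data $0\le u_0\le1$, then $$u(t,k)\ge\eta(|k-l|)\,(t-s)^{\frac1{1-\beta}}$$ for all $k,l\in\mathbb{Z}$ and all $s\ge0$, $t$ with $0\le t-s\le t^*(u(s,l))$.
   Context: $\Delta v(k)=v(k-1)-2v(k)+v(k+1)$. A solution: $u\in C^0([0,\infty);\ell^\infty_+(\mathbb{Z}))$ with $u(0)=u_0$, each $u(\cdot,k)\in C^1((0,\infty))$ satisfying $\frac{d}{dt}u(t,k)=\Delta(u^\beta)(t,k)$ for all $t>0$. *)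

theory Defs
  imports "HOL-Analysis.Analysis"
begin

definition dlap :: "(int \<Rightarrow> real) \<Rightarrow> int \<Rightarrow> real" where
  "dlap v k = v (k - 1) - 2 * v k + v (k + 1)"

definition is_solution :: "real \<Rightarrow> (int \<Rightarrow> real) \<Rightarrow> (real \<Rightarrow> int \<Rightarrow> real) \<Rightarrow> bool" where
  "is_solution \<beta> u0 u \<longleftrightarrow>
     u 0 = u0 \<and>
     (\<forall>t\<ge>0. (\<forall>k. 0 \<le> u t k) \<and> bounded (range (u t))) \<and>
     (\<forall>t\<ge>0. \<forall>\<epsilon>>0. \<exists>\<delta>>0. \<forall>s\<ge>0. \<bar>s - t\<bar> < \<delta> \<longrightarrow> (\<forall>k. \<bar>u s k - u t k\<bar> \<le> \<epsilon>)) \<and>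
     (\<forall>k. (\<forall>t>0. ((\<lambda>\<tau>. u \<tau> k) has_real_derivative dlap (\<lambda>j. u t j powr \<beta>) k) (at t)) \<and>
          continuous_on {0<..} (\<lambda>t. dlap (\<lambda>j. u t j powr \<beta>) k))"

end

theory Submission
  imports Defs
begin

text \<open>Write p = 1/(1-\<beta>) and v = u(s,l). As long as u(\<cdot>,l) \<le> v, the equation gives
  d/dt u(\<cdot>,l) \<ge> -2 v^\<beta>, so u(\<cdot>,l) stays above v/2 for a time of order v^(1-\<beta>), during
  which (t-s)^p \<le> v. If a neighbour j of k satisfies u(\<tau>,j) \<ge> e (\<tau>-s)^p, then
  \<Delta>(u^\<beta>)(k) \<ge> e^\<beta> (\<tau>-s)^(p-1) - 2 u(\<tau>,k)^\<beta>, and since p \<beta> = p - 1, comparison with the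
  barrier c (\<tau>-s)^p for small c passes the bound on to k. Induction on |k-l| yields \<eta>.\<close>

lemma nonneg_if_deriv_pos_where_nonpos:
  fixes h h' :: "real \<Rightarrow> real"
  assumes ab: "a \<le> b" and cont: "continuous_on {a..b} h" and ha: "0 \<le> h a"
    and deriv: "\<And>x. a < x \<Longrightarrow> x \<le> b \<Longrightarrow> (h has_real_derivative h' x) (at x)"
    and pos: "\<And>x. a < x \<Longrightarrow> x \<le> b \<Longrightarrow> h x \<le> 0 \<Longrightarrow> 0 < h' x"
  shows "0 \<le> h b"
proof (rule ccontr)
  assume hb: "\<not> 0 \<le> h b"
  define S where "S = {a..b} \<inter> h -` {0..}"
  have "closed S" unfolding S_def by (rule continuous_closed_preimage[OF cont]) auto
  moreover have bdd: "bdd_above S" unfolding S_def by (rule bdd_aboveI[of _ b]) auto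
  moreover have "a \<in> S" using ab ha by (simp add: S_def)
  ultimately have "Sup S \<in> S" using closed_contains_Sup by blast
  then have hx0: "0 \<le> h (Sup S)" and x0: "a \<le> Sup S" "Sup S \<le> b" by (auto simp: S_def)
  with hb have x0b: "Sup S < b" by (cases "Sup S = b") auto
  have neg: "h y < 0" if "Sup S < y" "y \<le> b" for y
    using that x0 cSup_upper[OF _ bdd, of y] by (force simp: S_def)
  have "continuous_on {Sup S..b} h" using continuous_on_subset[OF cont] x0 by auto
  moreover have "h differentiable (at x)" if "Sup S < x" "x < b" for x
    using deriv[of x] that x0 real_differentiable_def by auto
  ultimately obtain l z where z: "Sup S < z" "z < b" "DERIV h z :> l"
      "h b - h (Sup S) = (b - Sup S) * l"
    using MVT[OF x0b] by blast
  have "l = h' z" using DERIV_unique[OF z(3) deriv[of z]] z x0 by simp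
  moreover have "0 < h' z" using pos[of z] neg[of z] z x0 by simp
  ultimately have "0 < (b - Sup S) * l" using x0b by simp
  then show False using z(4) hx0 hb by simp
qed

lemma dlap_ge_neighbour:
  assumes "\<And>i. 0 \<le> v i" and "j = k - 1 \<or> j = k + 1"
  shows "v j - 2 * v k \<le> dlap v k"
  using assms(1)[of "k - 1"] assms(1)[of "k + 1"] assms(2) unfolding dlap_def by auto

lemma solution_nonneg: "is_solution \<beta> u0 u \<Longrightarrow> 0 \<le> t \<Longrightarrow> 0 \<le> u t k"
  unfolding is_solution_def by blast

lemma solution_continuous_on:
  assumes "is_solution \<beta> u0 u"
  shows "continuous_on {0..} (\<lambda>\<tau>. u \<tau> k)"
  unfolding continuous_on_iff dist_real_def
proof (intro ballI allI impI)
  fix t e :: real assume t: "t \<in> {0..}" and e: "0 < e"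
  then obtain d where "d > 0" "\<forall>s\<ge>0. \<bar>s - t\<bar> < d \<longrightarrow> (\<forall>k. \<bar>u s k - u t k\<bar> \<le> e / 2)"
    using assms half_gt_zero unfolding is_solution_def atLeast_iff by metis
  then show "\<exists>d>0. \<forall>s\<in>{0..}. \<bar>s - t\<bar> < d \<longrightarrow> \<bar>u s k - u t k\<bar> < e"
    using e by (intro exI[of _ d]) (auto intro: order_le_less_trans[of _ "e / 2"])
qed

lemma solution_above_barrier:
  assumes sol: "is_solution \<beta> u0 u" and s: "0 \<le> s" "s \<le> t"
    and cont: "continuous_on {s..t} w" and ws: "w s \<le> u s k"
    and deriv: "\<And>x. s < x \<Longrightarrow> x \<le> t \<Longrightarrow> (w has_real_derivative w' x) (at x)"
    and slower: "\<And>x. s < x \<Longrightarrow> x \<le> t \<Longrightarrow> u x k \<le> w x \<Longrightarrow>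
      w' x < dlap (\<lambda>j. u x j powr \<beta>) k"
  shows "w t \<le> u t k"
proof -
  have "0 \<le> u t k - w t"
  proof (rule nonneg_if_deriv_pos_where_nonpos[OF s(2)])
    show "continuous_on {s..t} (\<lambda>\<tau>. u \<tau> k - w \<tau>)"
      using continuous_on_subset[OF solution_continuous_on[OF sol]] s
      by (intro continuous_on_diff cont) auto
    fix x assume x: "s < x" "x \<le> t"
    then have "((\<lambda>\<tau>. u \<tau> k) has_real_derivative dlap (\<lambda>j. u x j powr \<beta>) k) (at x)"
      using sol s unfolding is_solution_def by simp
    then show "((\<lambda>\<tau>. u \<tau> k - w \<tau>) has_real_derivative
        dlap (\<lambda>j. u x j powr \<beta>) k - w' x) (at x)"
      using deriv[OF x] by (rule DERIV_diff)
    show "u x k - w x \<le> 0 \<Longrightarrow> 0 < dlap (\<lambda>j. u x j powr \<beta>) k - w' x"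
      using slower[OF x] by simp
  qed (use ws in simp)
  then show ?thesis by simp
qed

definition tstar :: "real \<Rightarrow> real \<Rightarrow> real" where
  "tstar \<beta> v = v powr (1 - \<beta>) / 6"

definition neighbour_coeff :: "real \<Rightarrow> real \<Rightarrow> real" where
  "neighbour_coeff \<beta> e = (min 1 (e powr \<beta> / (2 / (1 - \<beta>) + 4))) powr (1 / \<beta>)"

fun eta :: "real \<Rightarrow> nat \<Rightarrow> real" where
  "eta \<beta> 0 = 1 / 2"
| "eta \<beta> (Suc n) = neighbour_coeff \<beta> (eta \<beta> n)"

lemma strict_mono_on_tstar:
  assumes "\<beta> < 1"
  shows "strict_mono_on {0..} (tstar \<beta>)"
  using assms by (intro strict_mono_onI) (auto simp: tstar_def intro: powr_less_mono2)

lemma neighbour_coeff_bounds: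
  assumes b: "0 < \<beta>" "\<beta> < 1" and e: "0 < e"
  shows neighbour_coeff_pos: "0 < neighbour_coeff \<beta> e"
    and neighbour_coeff_small:
      "neighbour_coeff \<beta> e / (1 - \<beta>) + 2 * neighbour_coeff \<beta> e powr \<beta> < e powr \<beta>"
proof -
  define p where "p = 1 / (1 - \<beta>)"
  define C where "C = min 1 (e powr \<beta> / (2 * p + 4))"
  have p: "1 < p" using b by (simp add: p_def)
  have C: "0 < C" "C \<le> 1" using e p by (auto simp: C_def)
  have "C \<le> e powr \<beta> / (2 * p + 4)" by (simp add: C_def)
  then have C_le: "(2 * p + 4) * C \<le> e powr \<beta>" using p by (simp add: pos_le_divide_eq mult.commute)
  have c: "neighbour_coeff \<beta> e = C powr (1 / \<beta>)"
    by (simp add: neighbour_coeff_def C_def p_def)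
  then show "0 < neighbour_coeff \<beta> e" using C by simp
  have "C powr (1 / \<beta>) \<le> C powr 1" using C b by (intro powr_mono') auto
  then have "neighbour_coeff \<beta> e * p \<le> C * p" using c C p by simp
  moreover have "neighbour_coeff \<beta> e powr \<beta> = C" using c C b by (simp add: powr_powr)
  moreover have "0 < C * p" using C p by simp
  ultimately have "neighbour_coeff \<beta> e * p + 2 * neighbour_coeff \<beta> e powr \<beta> < e powr \<beta>"
    using C C_le by (simp add: algebra_simps)
  then show "neighbour_coeff \<beta> e / (1 - \<beta>) + 2 * neighbour_coeff \<beta> e powr \<beta> < e powr \<beta>"
    by (simp add: p_def)
qed

lemma eta_pos: "0 < \<beta> \<Longrightarrow> \<beta> < 1 \<Longrightarrow> 0 < eta \<beta> n"
  by (induction n) (simp_all add: neighbour_coeff_pos)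

lemma solution_lower_bound_at_origin:
  assumes sol: "is_solution \<beta> u0 u" and b: "0 < \<beta>" "\<beta> < 1"
    and s: "0 \<le> s" "s \<le> t" and short: "t - s \<le> tstar \<beta> (u s l)"
  shows "1 / 2 * (t - s) powr (1 / (1 - \<beta>)) \<le> u t l"
proof (cases "u s l = 0")
  case True
  then show ?thesis using short s solution_nonneg[OF sol, of t l] by (simp add: tstar_def)
next
  case False
  define v where "v = u s l"
  have v: "0 < v" using False solution_nonneg[OF sol s(1)] by (simp add: v_def less_le)
  have "v - 3 * v powr \<beta> * (t - s) \<le> u t l"
  proof (rule solution_above_barrier[OF sol s, where w' = "\<lambda>_. - 3 * v powr \<beta>"])
    show "continuous_on {s..t} (\<lambda>\<tau>. v - 3 * v powr \<beta> * (\<tau> - s))"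
      by (intro continuous_intros)
    fix x assume x: "s < x" "x \<le> t"
    show "((\<lambda>\<tau>. v - 3 * v powr \<beta> * (\<tau> - s)) has_real_derivative - 3 * v powr \<beta>) (at x)"
      by (auto intro!: derivative_eq_intros)
    assume below: "u x l \<le> v - 3 * v powr \<beta> * (x - s)"
    have "u x l \<le> v" using below x v by (smt (verit) mult_nonneg_nonneg powr_ge_zero)
    then have "u x l powr \<beta> \<le> v powr \<beta>"
      using solution_nonneg[OF sol, of x l] x s b by (simp add: powr_mono2)
    moreover have "u x (l - 1) powr \<beta> - 2 * u x l powr \<beta> \<le> dlap (\<lambda>j. u x j powr \<beta>) l"
      by (rule dlap_ge_neighbour) auto
    ultimately show "- 3 * v powr \<beta> < dlap (\<lambda>j. u x j powr \<beta>) l"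
      using v by (smt (verit) powr_ge_zero powr_gt_zero)
  qed (simp add: v_def)
  moreover have "3 * v powr \<beta> * (t - s) \<le> v / 2"
  proof -
    have "3 * v powr \<beta> * (t - s) \<le> 3 * v powr \<beta> * (v powr (1 - \<beta>) / 6)"
      using short by (intro mult_left_mono) (auto simp: v_def tstar_def)
    also have "\<dots> = v / 2" using v by (simp add: powr_add[symmetric])
    finally show ?thesis .
  qed
  moreover have "(t - s) powr (1 / (1 - \<beta>)) \<le> (v powr (1 - \<beta>)) powr (1 / (1 - \<beta>))"
    using short s b by (intro powr_mono2) (auto simp: v_def tstar_def)
  then have "(t - s) powr (1 / (1 - \<beta>)) \<le> v" using b v by (simp add: powr_powr)
  ultimately show ?thesis by simp
qed

lemma solution_lower_bound_from_neighbour: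
  assumes sol: "is_solution \<beta> u0 u" and b: "0 < \<beta>" "\<beta> < 1"
    and s: "0 \<le> s" "s \<le> t" and e: "0 < e" and jk: "j = k - 1 \<or> j = k + 1"
    and nb: "\<And>\<tau>. s \<le> \<tau> \<Longrightarrow> \<tau> \<le> t \<Longrightarrow> e * (\<tau> - s) powr (1 / (1 - \<beta>)) \<le> u \<tau> j"
  shows "neighbour_coeff \<beta> e * (t - s) powr (1 / (1 - \<beta>)) \<le> u t k"
proof -
  define p where "p = 1 / (1 - \<beta>)"
  define c where "c = neighbour_coeff \<beta> e"
  have p: "1 < p" "p * \<beta> = p - 1" using b by (auto simp: p_def field_simps)
  have c: "0 < c" "c * p + 2 * c powr \<beta> < e powr \<beta>"
    using neighbour_coeff_bounds[OF b e] by (simp_all add: c_def p_def)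
  have scale: "(a * (x - s) powr p) powr \<beta> = a powr \<beta> * (x - s) powr (p - 1)"
    if "0 < a" "s < x" for a x
    using that by (simp add: powr_mult powr_powr p(2))
  show ?thesis unfolding c_def[symmetric] p_def[symmetric]
  proof (rule solution_above_barrier[OF sol s, where w' = "\<lambda>x. c * (p * (x - s) powr (p - 1))"])
    show "continuous_on {s..t} (\<lambda>\<tau>. c * (\<tau> - s) powr p)"
      using p by (intro continuous_on_powr' continuous_intros) auto
    show "c * (s - s) powr p \<le> u s k" using solution_nonneg[OF sol s(1)] by simp
    fix x assume x: "s < x" "x \<le> t"
    then show "((\<lambda>\<tau>. c * (\<tau> - s) powr p) has_real_derivative c * (p * (x - s) powr (p - 1))) (at x)"
      by (auto intro!: derivative_eq_intros)
    assume below: "u x k \<le> c * (x - s) powr p"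
    define X where "X = (x - s) powr (p - 1)"
    have "u x k powr \<beta> \<le> c powr \<beta> * X"
      using powr_mono2[OF _ solution_nonneg[OF sol] below, of \<beta>] scale[OF c(1) x(1)] b x s
      by (simp add: X_def)
    moreover have "e powr \<beta> * X \<le> u x j powr \<beta>"
      using powr_mono2[OF _ _ nb[of x], of \<beta>] scale[OF e x(1)] b x e
      by (simp add: X_def p_def)
    moreover have "u x j powr \<beta> - 2 * u x k powr \<beta> \<le> dlap (\<lambda>j. u x j powr \<beta>) k"
      using jk by (rule dlap_ge_neighbour[rotated]) simp
    moreover have "(c * p + 2 * c powr \<beta>) * X < e powr \<beta> * X"
      using c(2) x by (simp add: X_def)
    ultimately show "c * (p * X) < dlap (\<lambda>j. u x j powr \<beta>) k"
      by (simp add: algebra_simps)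
  qed
qed

lemma solution_lower_bound:
  assumes sol: "is_solution \<beta> u0 u" and b: "0 < \<beta>" "\<beta> < 1"
    and s: "0 \<le> s" "s \<le> t" and short: "t - s \<le> tstar \<beta> (u s l)"
  shows "eta \<beta> (nat \<bar>k - l\<bar>) * (t - s) powr (1 / (1 - \<beta>)) \<le> u t k"
proof -
  have "eta \<beta> n * (t - s) powr (1 / (1 - \<beta>)) \<le> u t k" if "nat \<bar>k - l\<bar> = n" for n
    using that s short
  proof (induction n arbitrary: k t)
    case 0
    then show ?case using solution_lower_bound_at_origin[OF sol b] by simp
  next
    case (Suc n)
    define j where "j = (if l < k then k - 1 else k + 1)"
    have "nat \<bar>j - l\<bar> = n" using Suc.prems(1) by (auto simp: j_def)
    then have "eta \<beta> n * (\<tau> - s) powr (1 / (1 - \<beta>)) \<le> u \<tau> j" if "s \<le> \<tau>" "\<tau> \<le> t" for \<tau>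
      using Suc.IH[of j \<tau>] Suc.prems that by simp
    then show ?case
      using solution_lower_bound_from_neighbour[OF sol b Suc.prems(2,3) eta_pos[OF b], of j k]
      by (simp add: j_def)
  qed
  then show ?thesis by simp
qed

theorem lemmaA13:
  fixes \<beta> :: real
  assumes "0 < \<beta>" and "\<beta> < 1"
  shows "\<exists>(\<eta>::nat \<Rightarrow> real) (tstar::real \<Rightarrow> real).
     (\<forall>n. 0 < \<eta> n) \<and>
     (\<forall>v\<ge>0. 0 \<le> tstar v) \<and> strict_mono_on {0..} tstar \<and>
     (\<forall>v\<ge>0. tstar v = 0 \<longleftrightarrow> v = 0) \<and>
     (\<forall>u0 u. (\<forall>k. 0 \<le> u0 k \<and> u0 k \<le> 1) \<and> is_solution \<beta> u0 u \<longrightarrow>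
        (\<forall>k l s t. 0 \<le> s \<and> 0 \<le> t - s \<and> t - s \<le> tstar (u s l) \<longrightarrow>
           \<eta> (nat \<bar>k - l\<bar>) * (t - s) powr (1 / (1 - \<beta>)) \<le> u t k))"
proof (intro exI[of _ "eta \<beta>"] exI[of _ "tstar \<beta>"] conjI allI impI)
  show "0 < eta \<beta> n" for n using eta_pos assms by blast
  show "0 \<le> tstar \<beta> v" for v by (simp add: tstar_def)
  show "strict_mono_on {0..} (tstar \<beta>)" using strict_mono_on_tstar assms(2) .
  show "tstar \<beta> v = 0 \<longleftrightarrow> v = 0" for v by (simp add: tstar_def)
  fix u0 u k l s t
  assume "(\<forall>k. 0 \<le> u0 k \<and> u0 k \<le> 1) \<and> is_solution \<beta> u0 u"
    and "0 \<le> s \<and> 0 \<le> t - s \<and> t - s \<le> tstar \<beta> (u s l)"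
  then show "eta \<beta> (nat \<bar>k - l\<bar>) * (t - s) powr (1 / (1 - \<beta>)) \<le> u t k"
    using solution_lower_bound[OF _ assms] by auto
qed

end
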